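(* Let $f:\mathbb{R}\to\mathbb{R}$ be twice continuously differentiable. Let $u_1,\dots,u_n\in\mathbb{R}$, let $J=[\min_i u_i,\max_i u_i]$ and assume $f''(v)\neq 0$ for all $v\in J$. Let $t_1<t_2$ and $x_i(t)=x_i(t_1)+f'(u_i)(t-t_1)$, $i=1,\dots,n$, be characteristic particles with $x_1(t)<x_2(t)<\dots<x_n(t)$ for all $t\in[t_1,t_2]$. For each $t$ let $u(\cdot,t)$ be the interpolant of the particles $(x_i(t),u_i)$ defined below. Then $u$ is a classical (continuous) solution of $u_t+(f(u))_x=0$: it is continuous on $\{(x,t):t\in[t_1,t_2],\ x_1(t)\le x\le x_n(t)\}$ and satisfies $u_t+(f(u))_x=0$ at every point $(x,t)$ with $t\in(t_1,t_2)$ and $x_i(t)<x<x_{i+1}(t)$ for some $i$. In particular, for all $t\in[t_1,t_2]$ and $i=1,\dots,n-1$, $$\int_{x_i(t)}^{x_{i+1}(t)}u(x,t)\,\mathrm{d}x=\big(x_{i+1}(t)-x_i(t)\big)\,a(u_i,u_{i+1}).$$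
   Context: Interpolant: given particles $(x_i,u_i)$ with $x_1<\dots<x_n$, on $[x_i,x_{i+1}]$ define $u$ as the constant $u_i$ if $u_i=u_{i+1}$; otherwise $u$ is the inverse of the strictly monotone map $v\mapsto x_i+\frac{f'(v)-f'(u_i)}{f'(u_{i+1})-f'(u_i)}(x_{i+1}-x_i)$ on the closed interval with endpoints $u_i,u_{i+1}$. For $g:\mathbb{R}\to\mathbb{R}$ write $[g(u)]_{a}^{b}=g(b)-g(a)$. For $v_1\neq v_2$ the nonlinear average is $a(v_1,v_2)=\frac{[f'(u)u-f(u)]_{v_1}^{v_2}}{[f'(u)]_{v_1}^{v_2}}=\frac{\int_{v_1}^{v_2}f''(u)u\,\mathrm{d}u}{\int_{v_1}^{v_2}f''(u)\,\mathrm{d}u}$, and $a(v,v)=v$. *)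

theory Defs
  imports "HOL-Analysis.Analysis"
begin

definition interp_piece ::
  "(real \<Rightarrow> real) \<Rightarrow> real \<Rightarrow> real \<Rightarrow> real \<Rightarrow> real \<Rightarrow> real \<Rightarrow> real" where
  "interp_piece f' xl xr ul ur x =
     (if ul = ur then ul
      else (THE v. v \<in> {min ul ur..max ul ur} \<and>
              x = xl + (f' v - f' ul) / (f' ur - f' ul) * (xr - xl)))"

definition interpolant ::
  "(real \<Rightarrow> real) \<Rightarrow> nat \<Rightarrow> (nat \<Rightarrow> real) \<Rightarrow> (nat \<Rightarrow> real) \<Rightarrow> real \<Rightarrow> real" where
  "interpolant f' n xs us x =
     (if \<exists>i\<in>{1..<n}. xs i \<le> x \<and> x \<le> xs (Suc i)
      then (let i = (LEAST i. i \<in> {1..<n} \<and> xs i \<le> x \<and> x \<le> xs (Suc i))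
            in interp_piece f' (xs i) (xs (Suc i)) (us i) (us (Suc i)) x)
      else 0)"

definition nl_avg :: "(real \<Rightarrow> real) \<Rightarrow> (real \<Rightarrow> real) \<Rightarrow> real \<Rightarrow> real \<Rightarrow> real" where
  "nl_avg f f' v1 v2 =
     (if v1 = v2 then v1
      else ((f' v2 * v2 - f v2) - (f' v1 * v1 - f v1)) / (f' v2 - f' v1))"

end

theory Submission
  imports Defs
begin

text \<open>On a cell between two particles the interpolant is defined so that \<open>w = f' \<circ> u\<close> is affine
  in \<open>x\<close>. The endpoints move with speeds \<open>f' u\<^sub>i\<close> and \<open>f' u\<^sub>i\<^sub>+\<^sub>1\<close>, which makes \<open>w\<close> a solution of
  Burgers' equation \<open>w\<^sub>t + w w\<^sub>x = 0\<close>; since \<open>u\<^sub>t + (f u)\<^sub>x = (w\<^sub>t + w w\<^sub>x) / f'' u\<close>, the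
  interpolant solves the conservation law. For the integral, substitute \<open>z = w(x)\<close>: the integrand
  becomes the inverse \<open>g\<close> of \<open>f'\<close>, whose antiderivative is the Legendre transform
  \<open>z g(z) - f(g(z))\<close>; evaluating it at \<open>f' u\<^sub>i\<close> and \<open>f' u\<^sub>i\<^sub>+\<^sub>1\<close> gives the nonlinear average.\<close>

lemma convex_comb_between:
  fixes p q \<theta> :: real
  assumes "0 \<le> \<theta>" "\<theta> \<le> 1"
  shows "min p q \<le> p + \<theta> * (q - p)" "p + \<theta> * (q - p) \<le> max p q"
proof -
  have a: "\<theta> * (q - p) \<le> q - p" if "p \<le> q" using that assms by (simp add: mult_left_le_one_le)
  have b: "\<theta> * (p - q) \<le> p - q" if "q \<le> p" using that assms by (simp add: mult_left_le_one_le)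
  have c: "0 \<le> \<theta> * (q - p)" if "p \<le> q" using that assms by simp
  have d: "0 \<le> \<theta> * (p - q)" if "q \<le> p" using that assms by simp
  have e: "\<theta> * (p - q) = - (\<theta> * (q - p))" by (simp add: algebra_simps)
  show "min p q \<le> p + \<theta> * (q - p)" "p + \<theta> * (q - p) \<le> max p q"
    using a b c d e by (cases "p \<le> q"; simp add: min_def max_def; linarith)+
qed

lemma convex_comb_strictly_between:
  fixes p q \<theta> :: real
  assumes "0 < \<theta>" "\<theta> < 1" "p \<noteq> q"
  shows "min p q < p + \<theta> * (q - p)" "p + \<theta> * (q - p) < max p q"
proof -
  have a: "\<theta> * (q - p) < q - p" if "p < q" using that assms by simp
  have b: "\<theta> * (p - q) < p - q" if "q < p" using that assms by simp
  have c: "0 < \<theta> * (q - p)" if "p < q" using that assms by simp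
  have d: "0 < \<theta> * (p - q)" if "q < p" using that assms by simp
  have e: "\<theta> * (p - q) = - (\<theta> * (q - p))" by (simp add: algebra_simps)
  show "min p q < p + \<theta> * (q - p)" "p + \<theta> * (q - p) < max p q"
    using a b c d e assms(3) by (cases "p < q"; simp add: min_def max_def; linarith)+
qed

lemma strict_mono_segment_less:
  fixes xs :: "nat \<Rightarrow> real"
  assumes inc: "\<And>j. j \<in> {1..<n} \<Longrightarrow> xs j < xs (Suc j)"
  shows "1 \<le> j \<Longrightarrow> j < k \<Longrightarrow> k \<le> n \<Longrightarrow> xs j < xs k"
proof (induction k)
  case (Suc k)
  show ?case
  proof (cases "j = k")
    case True
    then show ?thesis using inc Suc.prems by auto
  next
    case False
    then have "xs j < xs k" using Suc by auto
    also have "xs k < xs (Suc k)" using inc Suc.prems False by auto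
    finally show ?thesis .
  qed
qed simp

lemma exists_cell_containing:
  fixes xs :: "nat \<Rightarrow> real"
  shows "1 < m \<Longrightarrow> xs 1 \<le> x \<Longrightarrow> x \<le> xs m \<Longrightarrow> \<exists>i\<in>{1..<m}. xs i \<le> x \<and> x \<le> xs (Suc i)"
proof (induction m)
  case (Suc m)
  show ?case
  proof (cases "x \<le> xs m")
    case True
    show ?thesis
    proof (cases "m = 1")
      case True
      then show ?thesis using Suc.prems \<open>x \<le> xs m\<close> by auto
    next
      case False
      then obtain i where "i \<in> {1..<m}" "xs i \<le> x \<and> x \<le> xs (Suc i)"
        using Suc True by auto
      then show ?thesis by auto
    qed
  next
    case False
    then show ?thesis using Suc.prems by (intro bexI[of _ m]) auto
  qed
qed simp

text \<open>The characteristic speed \<open>f'(u(x))\<close> of the interpolant \<open>u\<close> on the cell \<open>[xl, xr]\<close>.\<close>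
definition char_speed :: "(real \<Rightarrow> real) \<Rightarrow> real \<Rightarrow> real \<Rightarrow> real \<Rightarrow> real \<Rightarrow> real \<Rightarrow> real" where
  "char_speed f' xl xr ul ur x = f' ul + (x - xl) / (xr - xl) * (f' ur - f' ul)"

lemma char_speed_endpoints:
  assumes "xl \<noteq> xr"
  shows "char_speed f' xl xr ul ur xl = f' ul" "char_speed f' xl xr ul ur xr = f' ur"
  using assms by (simp_all add: char_speed_def)

lemma char_speed_between:
  assumes "xl < xr" "xl \<le> x" "x \<le> xr"
  shows "char_speed f' xl xr ul ur x \<in> {min (f' ul) (f' ur)..max (f' ul) (f' ur)}"
proof -
  have "0 \<le> (x - xl) / (xr - xl)" "(x - xl) / (xr - xl) \<le> 1" using assms by auto
  from convex_comb_between[OF this, of "f' ul" "f' ur"] show ?thesis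
    unfolding char_speed_def by simp
qed

lemma char_speed_strictly_between:
  assumes "xl < x" "x < xr" "f' ul \<noteq> f' ur"
  shows "min (f' ul) (f' ur) < char_speed f' xl xr ul ur x"
    "char_speed f' xl xr ul ur x < max (f' ul) (f' ur)"
proof -
  have "0 < (x - xl) / (xr - xl)" "(x - xl) / (xr - xl) < 1" using assms by auto
  from convex_comb_strictly_between[OF this assms(3)]
  show "min (f' ul) (f' ur) < char_speed f' xl xr ul ur x"
    "char_speed f' xl xr ul ur x < max (f' ul) (f' ur)"
    unfolding char_speed_def by simp_all
qed

lemma char_speed_has_real_derivative:
  assumes "xl \<noteq> xr"
  shows "(char_speed f' xl xr ul ur has_real_derivative (f' ur - f' ul) / (xr - xl)) (at x)"
proof -
  have eq: "char_speed f' xl xr ul ur = (\<lambda>y. f' ul + (y - xl) * ((f' ur - f' ul) / (xr - xl)))"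
    by (simp add: fun_eq_iff char_speed_def)
  show ?thesis unfolding eq using assms by (auto intro!: derivative_eq_intros)
qed

text \<open>Burgers' equation \<open>w\<^sub>t = - w w\<^sub>x\<close> for \<open>w = char_speed\<close> when the cell ends move along
  characteristics.\<close>
lemma char_speed_along_characteristics:
  fixes f' :: "real \<Rightarrow> real" and ul ur pl pr \<tau> x t :: real
  defines "xl \<equiv> \<lambda>s. pl + f' ul * (s - \<tau>)" and "xr \<equiv> \<lambda>s. pr + f' ur * (s - \<tau>)"
  assumes "xl t \<noteq> xr t"
  shows "((\<lambda>s. char_speed f' (xl s) (xr s) ul ur x) has_real_derivative
           - (f' ur - f' ul) * char_speed f' (xl t) (xr t) ul ur x / (xr t - xl t)) (at t)"
proof -
  have "xr t - xl t \<noteq> 0" using assms by simp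
  then show ?thesis
    unfolding xl_def xr_def char_speed_def
    apply (auto intro!: derivative_eq_intros)
    apply (simp add: divide_simps)
    apply (simp add: algebra_simps power2_eq_square)
    done
qed

context
  fixes f' f'' :: "real \<Rightarrow> real"
  assumes has_deriv_f': "\<And>v. (f' has_real_derivative f'' v) (at v)"
begin

abbreviation inv_f' :: "real \<Rightarrow> real \<Rightarrow> real \<Rightarrow> real" where
  "inv_f' ul ur \<equiv> the_inv_into {min ul ur..max ul ur} f'"

lemma continuous_on_f': "continuous_on S f'"
  by (meson DERIV_isCont continuous_at_imp_continuous_on has_deriv_f')

lemma inj_on_f':
  assumes "\<And>v. v \<in> {a..b} \<Longrightarrow> f'' v \<noteq> 0"
  shows "inj_on f' {a..b}"
proof (rule linorder_inj_onI')
  fix v1 v2 assume v: "v1 \<in> {a..b}" "v2 \<in> {a..b}" "v1 < v2"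
  show "f' v1 \<noteq> f' v2"
  proof
    assume "f' v1 = f' v2"
    then obtain z where z: "v1 < z" "z < v2" "(\<lambda>h. f'' z * h) = (\<lambda>h. 0)"
      using Rolle_deriv[OF v(3) _ continuous_on_f', of "\<lambda>x. (*) (f'' x)"] has_deriv_f'
      unfolding has_field_derivative_def by blast
    then have "f'' z = 0" by (metis mult_1_right)
    moreover have "z \<in> {a..b}" using v z by auto
    ultimately show False using assms by blast
  qed
qed

lemma Icc_subset_image_f':
  "{min (f' ul) (f' ur)..max (f' ul) (f' ur)} \<subseteq> f' ` {min ul ur..max ul ur}"
proof (rule connected_contains_Icc)
  show "connected (f' ` {min ul ur..max ul ur})"
    by (rule connected_continuous_image[OF continuous_on_f' connected_Icc])
  have "f' ul \<in> f' ` {min ul ur..max ul ur}" "f' ur \<in> f' ` {min ul ur..max ul ur}"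
    by (intro imageI; simp)+
  then show "min (f' ul) (f' ur) \<in> f' ` {min ul ur..max ul ur}"
    "max (f' ul) (f' ur) \<in> f' ` {min ul ur..max ul ur}"
    by (simp_all add: min_def max_def)
qed

context
  fixes ul ur :: real
  assumes nondeg: "\<And>v. v \<in> {min ul ur..max ul ur} \<Longrightarrow> f'' v \<noteq> 0"
begin

lemma inj_on_f'_between: "inj_on f' {min ul ur..max ul ur}"
  using inj_on_f' nondeg by blast

lemma f'_inv_f':
  assumes "y \<in> {min (f' ul) (f' ur)..max (f' ul) (f' ur)}"
  shows "f' (inv_f' ul ur y) = y" "inv_f' ul ur y \<in> {min ul ur..max ul ur}"
proof -
  have "y \<in> f' ` {min ul ur..max ul ur}" using Icc_subset_image_f' assms by blast
  then show "f' (inv_f' ul ur y) = y" "inv_f' ul ur y \<in> {min ul ur..max ul ur}"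
    using inj_on_f'_between by (auto simp: f_the_inv_into_f the_inv_into_f_f)
qed

lemma inv_f'_f': "v \<in> {min ul ur..max ul ur} \<Longrightarrow> inv_f' ul ur (f' v) = v"
  using inj_on_f'_between by (rule the_inv_into_f_f)

lemma continuous_on_inv_f':
  "continuous_on {min (f' ul) (f' ur)..max (f' ul) (f' ur)} (inv_f' ul ur)"
proof -
  have "continuous_on (f' ` {min ul ur..max ul ur}) (inv_f' ul ur)"
    by (rule continuous_on_inv[OF continuous_on_f']) (auto simp: inj_on_f'_between the_inv_into_f_f)
  then show ?thesis using Icc_subset_image_f' continuous_on_subset by blast
qed

lemma inv_f'_has_real_derivative:
  assumes y: "min (f' ul) (f' ur) < y" "y < max (f' ul) (f' ur)"
  shows "(inv_f' ul ur has_real_derivative inverse (f'' (inv_f' ul ur y))) (at y)"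
proof (rule DERIV_inverse_function[OF has_deriv_f' _ y])
  show "f'' (inv_f' ul ur y) \<noteq> 0"
    using f'_inv_f'(2)[of y] y nondeg by auto
  show "f' (inv_f' ul ur z) = z" if "min (f' ul) (f' ur) < z" "z < max (f' ul) (f' ur)" for z
    using f'_inv_f'(1)[of z] that by auto
  show "isCont (inv_f' ul ur) y"
    using continuous_on_interior[OF continuous_on_inv_f', of y] y by simp
qed

lemma interp_piece_eq_inv_f':
  assumes ne: "ul \<noteq> ur" and lr: "xl < xr" and x: "xl \<le> x" "x \<le> xr"
  shows "interp_piece f' xl xr ul ur x = inv_f' ul ur (char_speed f' xl xr ul ur x)"
proof -
  define w where "w = char_speed f' xl xr ul ur x"
  define v where "v = inv_f' ul ur w"
  have v: "f' v = w" "v \<in> {min ul ur..max ul ur}"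
    using f'_inv_f' char_speed_between[OF lr x] unfolding v_def w_def by blast+
  have "f' ur \<noteq> f' ul" using ne inj_on_f'_between by (auto dest: inj_onD)
  then have iff: "x = xl + (f' v' - f' ul) / (f' ur - f' ul) * (xr - xl) \<longleftrightarrow> f' v' = w" for v'
    unfolding w_def char_speed_def using lr by (auto simp: field_simps)
  have "(THE v. v \<in> {min ul ur..max ul ur} \<and> x = xl + (f' v - f' ul) / (f' ur - f' ul) * (xr - xl)) = v"
    using v inj_on_f'_between unfolding iff by (auto intro!: the_equality dest: inj_onD)
  then show ?thesis using ne unfolding interp_piece_def v_def w_def by simp
qed

lemma interp_piece_endpoints:
  assumes "xl < xr"
  shows "interp_piece f' xl xr ul ur xl = ul" "interp_piece f' xl xr ul ur xr = ur"
proof -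
  have "xl \<noteq> xr" using assms by simp
  show "interp_piece f' xl xr ul ur xl = ul"
  proof (cases "ul = ur")
    case False
    then show ?thesis
      using assms \<open>xl \<noteq> xr\<close> by (simp add: interp_piece_eq_inv_f' char_speed_endpoints inv_f'_f')
  qed (simp add: interp_piece_def)
  show "interp_piece f' xl xr ul ur xr = ur"
  proof (cases "ul = ur")
    case False
    then show ?thesis
      using assms \<open>xl \<noteq> xr\<close> by (simp add: interp_piece_eq_inv_f' char_speed_endpoints inv_f'_f')
  qed (simp add: interp_piece_def)
qed

lemma continuous_on_interp_piece:
  assumes "continuous_on S xl" "continuous_on S xr" "\<And>s. s \<in> S \<Longrightarrow> xl s < xr s"
  shows "continuous_on {(y, s). s \<in> S \<and> xl s \<le> y \<and> y \<le> xr s}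
           (\<lambda>(y, s). interp_piece f' (xl s) (xr s) ul ur y)"
proof (cases "ul = ur")
  case True
  then show ?thesis by (simp add: interp_piece_def case_prod_beta continuous_on_const)
next
  case False
  let ?C = "{(y, s). s \<in> S \<and> xl s \<le> y \<and> y \<le> xr s}"
  have cxl: "continuous_on ?C (\<lambda>p. xl (snd p))" and cxr: "continuous_on ?C (\<lambda>p. xr (snd p))"
    by (auto intro!: continuous_on_compose2[OF assms(1)] continuous_on_compose2[OF assms(2)]
        continuous_intros)
  have "continuous_on ?C (\<lambda>p. char_speed f' (xl (snd p)) (xr (snd p)) ul ur (fst p))"
    unfolding char_speed_def by (intro continuous_intros cxl cxr) (use assms(3) in fastforce)
  moreover have "char_speed f' (xl (snd p)) (xr (snd p)) ul ur (fst p)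
      \<in> {min (f' ul) (f' ur)..max (f' ul) (f' ur)}" if "p \<in> ?C" for p
    by (rule char_speed_between) (use that assms(3) in auto)
  then have "(\<lambda>p. char_speed f' (xl (snd p)) (xr (snd p)) ul ur (fst p)) ` ?C
      \<subseteq> {min (f' ul) (f' ur)..max (f' ul) (f' ur)}"
    by blast
  ultimately have "continuous_on ?C (\<lambda>p. inv_f' ul ur (char_speed f' (xl (snd p)) (xr (snd p)) ul ur (fst p)))"
    by (rule continuous_on_compose2[OF continuous_on_inv_f'])
  then show ?thesis
    by (rule continuous_on_eq) (auto simp: interp_piece_eq_inv_f'[OF False] assms(3))
qed

end

lemma interpolant_eq_interp_piece:
  assumes inc: "\<And>j. j \<in> {1..<n} \<Longrightarrow> xs j < xs (Suc j)"
    and nondeg: "\<And>j v. j \<in> {1..<n} \<Longrightarrow> v \<in> {min (us j) (us (Suc j))..max (us j) (us (Suc j))}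
                   \<Longrightarrow> f'' v \<noteq> 0"
    and i: "i \<in> {1..<n}" and x: "xs i \<le> x" "x \<le> xs (Suc i)"
  shows "interpolant f' n xs us x = interp_piece f' (xs i) (xs (Suc i)) (us i) (us (Suc i)) x"
proof -
  let ?P = "\<lambda>i. i \<in> {1..<n} \<and> xs i \<le> x \<and> x \<le> xs (Suc i)"
  define j where "j = (LEAST i. ?P i)"
  have Pi: "?P i" using i x by auto
  have Pj: "?P j" unfolding j_def by (rule LeastI[of ?P i, OF Pi])
  have "j \<le> i" unfolding j_def by (rule Least_le[of ?P i, OF Pi])
  have j: "j \<in> {1..<n}" using Pj by blast
  have "interp_piece f' (xs j) (xs (Suc j)) (us j) (us (Suc j)) x
        = interp_piece f' (xs i) (xs (Suc i)) (us i) (us (Suc i)) x"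
  proof (cases "j = i")
    case False
    with \<open>j \<le> i\<close> have "j < i" by simp
    have "Suc j = i"
    proof (rule ccontr)
      assume "Suc j \<noteq> i"
      then have "xs (Suc j) < xs i"
        using strict_mono_segment_less[of n xs, OF inc, of "Suc j" i] \<open>j < i\<close> i by auto
      then show False using Pj x by auto
    qed
    text \<open>\<open>x\<close> is the common endpoint of cells \<open>j\<close> and \<open>i\<close>, where both pieces take the value \<open>us i\<close>.\<close>
    moreover from this have "x = xs i" using Pj x by auto
    ultimately show ?thesis
      using interp_piece_endpoints(2)[of "us j" "us (Suc j)", OF nondeg[OF j] inc[OF j]]
        interp_piece_endpoints(1)[of "us i" "us (Suc i)", OF nondeg[OF i] inc[OF i]] by simp
  qed simp
  moreover have "\<exists>i\<in>{1..<n}. xs i \<le> x \<and> x \<le> xs (Suc i)" using Pi by blast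
  ultimately show ?thesis unfolding interpolant_def j_def[symmetric] by (simp add: Let_def)
qed

lemma continuous_on_interpolant:
  assumes nondeg: "\<And>j v. j \<in> {1..<n} \<Longrightarrow> v \<in> {min (us j) (us (Suc j))..max (us j) (us (Suc j))}
                   \<Longrightarrow> f'' v \<noteq> 0"
    and "closed S" and X: "\<And>j. continuous_on S (\<lambda>s. X s j)"
    and inc: "\<And>s j. s \<in> S \<Longrightarrow> j \<in> {1..<n} \<Longrightarrow> X s j < X s (Suc j)"
  shows "continuous_on {(x, s). s \<in> S \<and> X s 1 \<le> x \<and> x \<le> X s n}
           (\<lambda>(x, s). interpolant f' n (X s) us x)"
proof (cases "n \<le> 1")
  case True
  then have "{1..<n} = {}" by auto
  then show ?thesis by (simp add: interpolant_def case_prod_beta continuous_on_const)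
next
  case False
  define C where "C i = {(x, s). s \<in> S \<and> X s i \<le> x \<and> x \<le> X s (Suc i)}" for i
  have "(x, s) \<in> (\<Union>i\<in>{1..<n}. C i)" if xs: "s \<in> S" "X s 1 \<le> x" "x \<le> X s n" for x s
  proof -
    obtain i where "i \<in> {1..<n}" "X s i \<le> x" "x \<le> X s (Suc i)"
      using exists_cell_containing[of n "X s" x] False xs by auto
    then show ?thesis using xs(1) unfolding C_def by auto
  qed
  then have "{(x, s). s \<in> S \<and> X s 1 \<le> x \<and> x \<le> X s n} \<subseteq> (\<Union>i\<in>{1..<n}. C i)" by auto
  moreover have "continuous_on (\<Union>i\<in>{1..<n}. C i) (\<lambda>(x, s). interpolant f' n (X s) us x)"
  proof (rule continuous_on_closed_Union)
    fix i assume i: "i \<in> {1..<n}"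
    have cX: "continuous_on (UNIV \<times> S) (\<lambda>p. X (snd p) j)" for j
      by (auto intro!: continuous_on_compose2[OF X] continuous_intros)
    have "C i = {p \<in> UNIV \<times> S. X (snd p) i \<le> fst p} \<inter> {p \<in> UNIV \<times> S. fst p \<le> X (snd p) (Suc i)}"
      unfolding C_def by auto
    then show "closed (C i)"
      using \<open>closed S\<close> by (auto intro!: closed_Int continuous_on_closed_Collect_le cX
          continuous_intros closed_Times)
    have "\<And>s. s \<in> S \<Longrightarrow> X s i < X s (Suc i)" using inc i by blast
    from continuous_on_interp_piece[of "us i" "us (Suc i)", OF nondeg[OF i] X[of i] X[of "Suc i"] this]
    have "continuous_on (C i) (\<lambda>(x, s). interp_piece f' (X s i) (X s (Suc i)) (us i) (us (Suc i)) x)"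
      unfolding C_def .
    moreover have "(\<lambda>(x, s). interp_piece f' (X s i) (X s (Suc i)) (us i) (us (Suc i)) x) p
        = (\<lambda>(x, s). interpolant f' n (X s) us x) p" if "p \<in> C i" for p
    proof -
      obtain x s where p: "p = (x, s)" by fastforce
      have s: "s \<in> S" "X s i \<le> x" "x \<le> X s (Suc i)" using that unfolding p C_def by auto
      show ?thesis
        unfolding p prod.case
        by (rule interpolant_eq_interp_piece[where xs = "X s", OF inc[OF s(1)] nondeg i s(2,3), symmetric])
    qed
    ultimately show "continuous_on (C i) (\<lambda>(x, s). interpolant f' n (X s) us x)"
      by (rule continuous_on_eq)
  qed simp
  ultimately show ?thesis by (rule continuous_on_subset[rotated])
qed

context
  fixes f :: "real \<Rightarrow> real"
  assumes has_deriv_f: "\<And>v. (f has_real_derivative f' v) (at v)"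
begin

lemma continuous_on_f: "continuous_on S f"
  by (meson DERIV_isCont continuous_at_imp_continuous_on has_deriv_f)

lemma legendre_has_real_derivative:
  assumes nondeg: "\<And>v. v \<in> {min ul ur..max ul ur} \<Longrightarrow> f'' v \<noteq> 0"
    and z: "min (f' ul) (f' ur) < z" "z < max (f' ul) (f' ur)"
  shows "((\<lambda>z. z * inv_f' ul ur z - f (inv_f' ul ur z)) has_real_derivative inv_f' ul ur z) (at z)"
proof -
  have g': "(inv_f' ul ur has_real_derivative inverse (f'' (inv_f' ul ur z))) (at z)"
    using inv_f'_has_real_derivative[of ul ur, OF nondeg z] .
  have "f' (inv_f' ul ur z) = z" using f'_inv_f'(1)[of ul ur, OF nondeg] z by auto
  then show ?thesis
    using DERIV_diff[OF DERIV_mult[OF DERIV_ident g'] DERIV_chain2[OF has_deriv_f g']] by simp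
qed

lemma has_integral_inv_f'_char_speed:
  fixes ul ur xl xr :: real
  assumes nondeg: "\<And>v. v \<in> {min ul ur..max ul ur} \<Longrightarrow> f'' v \<noteq> 0"
    and lr: "xl < xr" and ne: "f' ul \<noteq> f' ur"
  defines "G \<equiv> \<lambda>z. z * inv_f' ul ur z - f (inv_f' ul ur z)"
  shows "((\<lambda>y. inv_f' ul ur (char_speed f' xl xr ul ur y)) has_integral
           (xr - xl) / (f' ur - f' ul) * (G (f' ur) - G (f' ul))) {xl..xr}"
proof -
  let ?I = "{min (f' ul) (f' ur)..max (f' ul) (f' ur)}"
  define D where "D = f' ur - f' ul"
  define w where "w = char_speed f' xl xr ul ur"
  define F where "F = (\<lambda>y. (xr - xl) / D * G (w y))"
  have "D \<noteq> 0" using ne unfolding D_def by simp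
  have inv_cont: "continuous_on ?I (inv_f' ul ur)" by (rule continuous_on_inv_f'[of ul ur, OF nondeg])
  moreover have "continuous_on ?I (\<lambda>z. f (inv_f' ul ur z))"
    by (rule continuous_on_compose2[OF continuous_on_f[of UNIV] inv_cont]) simp
  ultimately have G_cont: "continuous_on ?I G" unfolding G_def by (intro continuous_intros)
  have "continuous_on {xl..xr} w"
    unfolding w_def char_speed_def by (intro continuous_intros) (use lr in auto)
  moreover have "w ` {xl..xr} \<subseteq> ?I" using char_speed_between[OF lr] unfolding w_def by auto
  ultimately have "continuous_on {xl..xr} (\<lambda>y. G (w y))"
    by (rule continuous_on_compose2[OF G_cont])
  then have F_cont: "continuous_on {xl..xr} F" unfolding F_def by (intro continuous_intros)
  have F_deriv: "(F has_vector_derivative inv_f' ul ur (w y)) (at y)" if y: "y \<in> {xl<..<xr}" for y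
  proof -
    have "min (f' ul) (f' ur) < w y" "w y < max (f' ul) (f' ur)"
      using char_speed_strictly_between[of xl y xr] y ne unfolding w_def by auto
    from legendre_has_real_derivative[of ul ur, OF nondeg this]
    have "(G has_real_derivative inv_f' ul ur (w y)) (at (w y))" unfolding G_def .
    moreover have "(w has_real_derivative D / (xr - xl)) (at y)"
      unfolding w_def D_def using lr by (intro char_speed_has_real_derivative) simp
    ultimately have "(F has_real_derivative (xr - xl) / D * (inv_f' ul ur (w y) * (D / (xr - xl)))) (at y)"
      unfolding F_def by (intro DERIV_cmult DERIV_chain2)
    moreover have "(xr - xl) / D * (inv_f' ul ur (w y) * (D / (xr - xl))) = inv_f' ul ur (w y)"
      using lr \<open>D \<noteq> 0\<close> by (simp add: field_simps)
    ultimately show ?thesis by (simp add: has_real_derivative_iff_has_vector_derivative)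
  qed
  have "w xl = f' ul" "w xr = f' ur" using lr unfolding w_def by (simp_all add: char_speed_endpoints)
  then have "F xr - F xl = (xr - xl) / (f' ur - f' ul) * (G (f' ur) - G (f' ul))"
    unfolding F_def D_def by (simp add: right_diff_distrib)
  with fundamental_theorem_of_calculus_interior[OF less_imp_le[OF lr] F_cont F_deriv]
  show ?thesis unfolding w_def by simp
qed

lemma integral_interp_piece:
  assumes nondeg: "\<And>v. v \<in> {min ul ur..max ul ur} \<Longrightarrow> f'' v \<noteq> 0"
    and lr: "xl < xr"
  shows "integral {xl..xr} (interp_piece f' xl xr ul ur) = (xr - xl) * nl_avg f f' ul ur"
proof (cases "ul = ur")
  case True
  then have "interp_piece f' xl xr ul ur = (\<lambda>_. ul)" by (simp add: fun_eq_iff interp_piece_def)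
  then show ?thesis using True lr by (simp add: nl_avg_def)
next
  case False
  then have ne: "f' ul \<noteq> f' ur" using inj_on_f'_between[of ul ur, OF nondeg] by (auto dest: inj_onD)
  have inv_f'_ends: "inv_f' ul ur (f' ul) = ul" "inv_f' ul ur (f' ur) = ur"
    by (rule inv_f'_f'[of ul ur, OF nondeg]; auto)+
  have "interp_piece f' xl xr ul ur y = inv_f' ul ur (char_speed f' xl xr ul ur y)" if "y \<in> {xl..xr}" for y
    by (rule interp_piece_eq_inv_f'[of ul ur, OF nondeg False lr]) (use that in auto)
  then have "integral {xl..xr} (interp_piece f' xl xr ul ur)
      = integral {xl..xr} (\<lambda>y. inv_f' ul ur (char_speed f' xl xr ul ur y))"
    by (rule integral_cong)
  also have "\<dots> = (xr - xl) / (f' ur - f' ul) * ((f' ur * ur - f ur) - (f' ul * ul - f ul))"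
    using integral_unique[OF has_integral_inv_f'_char_speed[of ul ur, OF nondeg lr ne]] inv_f'_ends by simp
  also have "\<dots> = (xr - xl) * nl_avg f f' ul ur"
    using False by (simp add: nl_avg_def)
  finally show ?thesis .
qed

lemma integral_interpolant_cell:
  assumes inc: "\<And>j. j \<in> {1..<n} \<Longrightarrow> xs j < xs (Suc j)"
    and nondeg: "\<And>j v. j \<in> {1..<n} \<Longrightarrow> v \<in> {min (us j) (us (Suc j))..max (us j) (us (Suc j))}
                   \<Longrightarrow> f'' v \<noteq> 0"
    and i: "i \<in> {1..<n}"
  shows "integral {xs i..xs (Suc i)} (interpolant f' n xs us)
           = (xs (Suc i) - xs i) * nl_avg f f' (us i) (us (Suc i))"
proof -
  have "interpolant f' n xs us y = interp_piece f' (xs i) (xs (Suc i)) (us i) (us (Suc i)) y"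
    if "y \<in> {xs i..xs (Suc i)}" for y
    by (rule interpolant_eq_interp_piece[where xs = xs, OF inc nondeg i]) (use that in auto)
  then have "integral {xs i..xs (Suc i)} (interpolant f' n xs us)
        = integral {xs i..xs (Suc i)} (interp_piece f' (xs i) (xs (Suc i)) (us i) (us (Suc i)))"
    by (rule integral_cong)
  then show ?thesis using integral_interp_piece[of "us i" "us (Suc i)", OF nondeg[OF i] inc[OF i]] by simp
qed

lemma interp_piece_conservation_law:
  fixes ul ur pl pr \<tau> t x :: real
  assumes nondeg: "\<And>v. v \<in> {min ul ur..max ul ur} \<Longrightarrow> f'' v \<noteq> 0"
  defines "xl \<equiv> \<lambda>s. pl + f' ul * (s - \<tau>)" and "xr \<equiv> \<lambda>s. pr + f' ur * (s - \<tau>)"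
  defines "u \<equiv> \<lambda>y s. interp_piece f' (xl s) (xr s) ul ur y"
  assumes x: "xl t < x" "x < xr t"
  shows "\<exists>ut fx. ((\<lambda>s. u x s) has_real_derivative ut) (at t)
                 \<and> ((\<lambda>y. f (u y t)) has_real_derivative fx) (at x) \<and> ut + fx = 0"
proof (cases "ul = ur")
  case True
  then show ?thesis by (auto simp: u_def interp_piece_def intro!: exI[of _ 0] DERIV_const)
next
  case False
  define w where "w y s = char_speed f' (xl s) (xr s) ul ur y" for y s
  define g' where "g' = inverse (f'' (inv_f' ul ur (w x t)))"
  have "f' ul \<noteq> f' ur" using False inj_on_f'_between[of ul ur, OF nondeg] by (auto dest: inj_onD)
  then have w_between: "min (f' ul) (f' ur) < w x t" "w x t < max (f' ul) (f' ur)"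
    unfolding w_def using char_speed_strictly_between x by blast+
  have g: "(inv_f' ul ur has_real_derivative g') (at (w x t))"
    unfolding g'_def using inv_f'_has_real_derivative[of ul ur, OF nondeg w_between] .
  have f'_g: "f' (inv_f' ul ur (w x t)) = w x t" using f'_inv_f'(1)[of ul ur, OF nondeg] w_between by auto
  have "xl t \<noteq> xr t" using x by simp
  then have w_t: "((\<lambda>s. w x s) has_real_derivative - (f' ur - f' ul) * w x t / (xr t - xl t)) (at t)"
    unfolding w_def xl_def xr_def by (rule char_speed_along_characteristics)
  have w_x: "((\<lambda>y. w y t) has_real_derivative (f' ur - f' ul) / (xr t - xl t)) (at x)"
    unfolding w_def by (rule char_speed_has_real_derivative) (use x in simp)
  have u_eq: "inv_f' ul ur (w y s) = u y s" if "xl s < y" "y < xr s" for y s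
    unfolding u_def w_def
    by (rule interp_piece_eq_inv_f'[of ul ur, OF nondeg False, symmetric]) (use that in auto)
  define T where "T = {s. xl s < x \<and> x < xr s}"
  have "open T"
    unfolding T_def xl_def xr_def by (intro open_Collect_conj open_Collect_less continuous_intros)
  moreover have "t \<in> T" using x unfolding T_def by simp
  ultimately have "((\<lambda>s. u x s) has_real_derivative g' * (- (f' ur - f' ul) * w x t / (xr t - xl t))) (at t)"
    by (rule has_field_derivative_transform_within_open[OF DERIV_chain2[OF g w_t]])
       (use u_eq in \<open>simp add: T_def\<close>)
  moreover have "((\<lambda>y. f (u y t)) has_real_derivative
                   f' (inv_f' ul ur (w x t)) * (g' * ((f' ur - f' ul) / (xr t - xl t)))) (at x)"
    by (rule has_field_derivative_transform_within_open[OF DERIV_chain2[OF has_deriv_f DERIV_chain2[OF g w_x]],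
          where S="{xl t<..<xr t}"])
       (use x u_eq in auto)
  moreover have "g' * (- (f' ur - f' ul) * w x t / (xr t - xl t))
      + w x t * (g' * ((f' ur - f' ul) / (xr t - xl t))) = 0"
    by (simp add: algebra_simps add_divide_distrib[symmetric])
  ultimately show ?thesis unfolding f'_g by blast
qed

lemma interpolant_conservation_law:
  fixes x0 :: "nat \<Rightarrow> real" and \<tau> t x :: real
  assumes nondeg: "\<And>j v. j \<in> {1..<n} \<Longrightarrow> v \<in> {min (us j) (us (Suc j))..max (us j) (us (Suc j))}
                   \<Longrightarrow> f'' v \<noteq> 0"
    and X: "X = (\<lambda>s j. x0 j + f' (us j) * (s - \<tau>))"
    and "open T" "t \<in> T" and inc: "\<And>s j. s \<in> T \<Longrightarrow> j \<in> {1..<n} \<Longrightarrow> X s j < X s (Suc j)"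
    and i: "i \<in> {1..<n}" and x: "X t i < x" "x < X t (Suc i)"
  shows "\<exists>ut fx. ((\<lambda>s. interpolant f' n (X s) us x) has_real_derivative ut) (at t)
                 \<and> ((\<lambda>y. f (interpolant f' n (X t) us y)) has_real_derivative fx) (at x) \<and> ut + fx = 0"
proof -
  let ?u = "\<lambda>y s. interp_piece f' (X s i) (X s (Suc i)) (us i) (us (Suc i)) y"
  have U_eq: "interpolant f' n (X s) us y = ?u y s" if "s \<in> T" "X s i \<le> y" "y \<le> X s (Suc i)" for y s
    by (rule interpolant_eq_interp_piece[where xs = "X s", OF inc[OF that(1)] nondeg i that(2,3)])
  obtain ut fx where d: "((\<lambda>s. ?u x s) has_real_derivative ut) (at t)"
    "((\<lambda>y. f (?u y t)) has_real_derivative fx) (at x)" "ut + fx = 0"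
    using interp_piece_conservation_law[where ul = "us i" and ur = "us (Suc i)" and pl = "x0 i"
        and pr = "x0 (Suc i)" and \<tau> = \<tau> and t = t and x = x, OF nondeg[OF i]] x
    unfolding X by blast
  have "open (T \<inter> {s. X s i < x \<and> x < X s (Suc i)})"
    unfolding X by (intro open_Int \<open>open T\<close> open_Collect_conj open_Collect_less continuous_intros)
  then have "((\<lambda>s. interpolant f' n (X s) us x) has_real_derivative ut) (at t)"
    by (rule has_field_derivative_transform_within_open[OF d(1)])
       (use \<open>t \<in> T\<close> x in \<open>auto simp: U_eq\<close>)
  moreover have "((\<lambda>y. f (interpolant f' n (X t) us y)) has_real_derivative fx) (at x)"
    by (rule has_field_derivative_transform_within_open[OF d(2), where S="{X t i<..<X t (Suc i)}"])
       (use \<open>t \<in> T\<close> x in \<open>auto simp: U_eq\<close>)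
  ultimately show ?thesis using d(3) by blast
qed

end

end

lemma Icc_adjacent_subset_Icc_Min_Max:
  fixes us :: "nat \<Rightarrow> real"
  assumes "j \<in> {1..<n}"
  shows "{min (us j) (us (Suc j))..max (us j) (us (Suc j))} \<subseteq> {Min (us ` {1..n})..Max (us ` {1..n})}"
proof -
  have "Min (us ` {1..n}) \<le> min (us j) (us (Suc j))" "max (us j) (us (Suc j)) \<le> Max (us ` {1..n})"
    using assms by (auto intro!: Min_le Max_ge)
  then show ?thesis by auto
qed

theorem corollary2:
  fixes f f' f'' :: "real \<Rightarrow> real"
    and n :: nat
    and us :: "nat \<Rightarrow> real"
    and x0 :: "nat \<Rightarrow> real"
    and t1 t2 :: real
  assumes df: "\<And>v. (f has_real_derivative f' v) (at v)"
    and df': "\<And>v. (f' has_real_derivative f'' v) (at v)"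
    and cont: "continuous_on UNIV f''"
    and n: "1 \<le> n"
    and nondeg: "\<And>v. Min (us ` {1..n}) \<le> v \<Longrightarrow> v \<le> Max (us ` {1..n}) \<Longrightarrow> f'' v \<noteq> 0"
    and t12: "t1 < t2"
    and order: "\<And>t i. t \<in> {t1..t2} \<Longrightarrow> i \<in> {1..<n} \<Longrightarrow>
                   x0 i + f' (us i) * (t - t1) < x0 (Suc i) + f' (us (Suc i)) * (t - t1)"
  defines "X \<equiv> (\<lambda>t i. x0 i + f' (us i) * (t - t1))"
    and "U \<equiv> (\<lambda>x t. interpolant f' n (\<lambda>i. x0 i + f' (us i) * (t - t1)) us x)"
  shows "continuous_on {(x, t). t \<in> {t1..t2} \<and> X t 1 \<le> x \<and> x \<le> X t n} (\<lambda>(x, t). U x t)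
         \<and> (\<forall>t \<in> {t1<..<t2}. \<forall>i \<in> {1..<n}. \<forall>x. X t i < x \<and> x < X t (Suc i) \<longrightarrow>
              (\<exists>ut fx. ((\<lambda>s. U x s) has_real_derivative ut) (at t)
                     \<and> ((\<lambda>y. f (U y t)) has_real_derivative fx) (at x)
                     \<and> ut + fx = 0))
         \<and> (\<forall>t \<in> {t1..t2}. \<forall>i \<in> {1..<n}.
              integral {X t i..X t (Suc i)} (\<lambda>x. U x t)
                = (X t (Suc i) - X t i) * nl_avg f f' (us i) (us (Suc i)))"
proof -
  have nondeg_cell: "f'' v \<noteq> 0"
    if "j \<in> {1..<n}" "v \<in> {min (us j) (us (Suc j))..max (us j) (us (Suc j))}" for j v
    using subsetD[OF Icc_adjacent_subset_Icc_Min_Max[OF that(1)] that(2)] nondeg by auto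
  have U: "U = (\<lambda>x t. interpolant f' n (X t) us x)" unfolding U_def X_def ..
  have inc: "X t j < X t (Suc j)" if "t \<in> {t1..t2}" "j \<in> {1..<n}" for t j
    using order[OF that] unfolding X_def .
  have "continuous_on {t1..t2} (\<lambda>t. X t j)" for j
    unfolding X_def by (intro continuous_intros)
  from continuous_on_interpolant[where X = X, OF df' nondeg_cell closed_atLeastAtMost this inc]
  have "continuous_on {(x, t). t \<in> {t1..t2} \<and> X t 1 \<le> x \<and> x \<le> X t n} (\<lambda>(x, t). U x t)"
    unfolding U .
  moreover have "\<exists>ut fx. ((\<lambda>s. U x s) has_real_derivative ut) (at t)
                     \<and> ((\<lambda>y. f (U y t)) has_real_derivative fx) (at x) \<and> ut + fx = 0"
    if "t \<in> {t1<..<t2}" "i \<in> {1..<n}" "X t i < x" "x < X t (Suc i)" for t i x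
  proof -
    have "X s j < X s (Suc j)" if "s \<in> {t1<..<t2}" "j \<in> {1..<n}" for s j
      using inc that by auto
    from interpolant_conservation_law[OF df' df nondeg_cell meta_eq_to_obj_eq[OF X_def]
        open_greaterThanLessThan that(1) this that(2-4)]
    show ?thesis unfolding U .
  qed
  moreover have "integral {X t i..X t (Suc i)} (\<lambda>x. U x t)
                   = (X t (Suc i) - X t i) * nl_avg f f' (us i) (us (Suc i))"
    if "t \<in> {t1..t2}" "i \<in> {1..<n}" for t i
    using integral_interpolant_cell[where xs = "X t", OF df' df inc[OF that(1)] nondeg_cell that(2)] by (simp add: U)
  ultimately show ?thesis by blast
qed

end
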